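(* For every $\tau\in\mathbb{Z}$ and every integer $m\geq1$, \[ (-1)^{m\tau}\sum_{|\nu|=m}\frac{1}{\mathfrak{z}_\nu}\,\frac{\{m\tau\nu\}\,\{\nu\}_a}{\{\nu\}}\ \in\ \mathbb{Z}[q^{\pm\frac12},a^{\pm\frac12}]. \] Equivalently, for $\tau\neq0$, $\{m\}\{m\tau\}\mathcal{Z}_m(q,a)\in\mathbb{Z}[q^{\pm\frac12},a^{\pm\frac12}]$.
   Context: $\{n\}_x=x^{n/2}-x^{-n/2}$, $\{n\}=\{n\}_q$; for a partition $\nu=(\nu_1,\dots,\nu_\ell)$ of $m$: $\{\nu\}_x=\prod_i\{\nu_i\}_x$, $\{\nu\}=\{\nu\}_q$, $\{m\tau\nu\}=\prod_i\{m\tau\nu_i\}$; $\mathfrak{z}_\nu=\prod_j j^{k_j}k_j!$ with $k_j$ the number of parts equal to $j$. For $\tau\neq0$, $\mathcal{Z}_m(q,a)=(-1)^{m\tau}\sum_{|\nu|=m}\frac{1}{\mathfrak{z}_\nu}\frac{\{m\nu\tau\}}{\{m\}\{m\tau\}}\frac{\{\nu\}_a}{\{\nu\}}$, so the displayed sum equals $\{m\}\{m\tau\}\mathcal{Z}_m(q,a)$. *)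

theory Defs
  imports Complex_Main "HOL-Library.Multiset"
begin

text \<open>We write q = s^2 and a = t^2, i.e. s = q^(1/2), t = a^(1/2).
  Then {n}_x with x = s^2 is  s^n - s^(-n).\<close>
definition qbr :: "real \<Rightarrow> int \<Rightarrow> real" where
  "qbr s n = s powi n - s powi (-n)"

definition partitions :: "nat \<Rightarrow> nat multiset set" where
  "partitions m = {\<nu>. (\<forall>i\<in>#\<nu>. 0 < i) \<and> sum_mset \<nu> = m}"

definition zee :: "nat multiset \<Rightarrow> nat" where
  "zee \<nu> = (\<Prod>j\<in>set_mset \<nu>. j ^ count \<nu> j * fact (count \<nu> j))"

definition Zsum :: "int \<Rightarrow> nat \<Rightarrow> real \<Rightarrow> real \<Rightarrow> real" where
  "Zsum \<tau> m s t = (-1) powi (int m * \<tau>) *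
     (\<Sum>\<nu>\<in>partitions m. (1 / real (zee \<nu>)) *
        ((\<Prod>i\<in>#\<nu>. qbr s (int m * \<tau> * int i)) * (\<Prod>i\<in>#\<nu>. qbr t (int i))
         / (\<Prod>i\<in>#\<nu>. qbr s (int i))))"

end

theory Submission
  imports Defs
begin

text \<open>
  Write q = s^2, a = t^2 and N = m\<tau>. For every k \<ge> 1, expanding {Nk}/{k} as a geometric
  series shows that {Nk}{k}_a/{k} is the k-th power sum p_k of a finite signed alphabet of
  Laurent monomials s^(2j+1-|N|) t^(\<plusminus>1). The sum over partitions weighted by 1/z_\<nu> is then
  the complete homogeneous symmetric function h_m of that alphabet, which is characterised by
  Newton's identity m h_m = \<Sum>_k p_k h_(m-k). Adding a letter x with sign + or - multiplies
  \<Sum> h_m z^m by 1/(1 - xz) or by 1 - xz, so h_m is an integer polynomial in the letters.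
\<close>

lemma mem_le_sum_mset: "(i::nat) \<in># M \<Longrightarrow> i \<le> sum_mset M"
  by (induction M) auto

lemma size_le_sum_mset: "(\<forall>i\<in>#M. 0 < (i::nat)) \<Longrightarrow> size M \<le> sum_mset M"
  by (induction M) auto

lemma finite_partitions: "finite (partitions m)"
proof (rule finite_subset)
  show "partitions m \<subseteq> (\<Union>k\<le>m. multisets_of_size {..m} k)"
    unfolding partitions_def multisets_of_size_def
    using mem_le_sum_mset size_le_sum_mset by fastforce
qed auto

lemma partitions_0: "partitions 0 = {{#}}"
proof -
  have "\<nu> = {#}" if "sum_mset \<nu> = (0::nat)" "\<forall>i\<in>#\<nu>. 0 < i" for \<nu>
    using that by (cases \<nu>) auto
  then show ?thesis unfolding partitions_def by auto
qed

lemma sum_mset_eq_sum_count: "sum_mset M = (\<Sum>j\<in>set_mset M. j * count M (j::nat))"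
proof (induction M)
  case (add a M)
  have "(\<Sum>j\<in>set_mset (add_mset a M). j * count (add_mset a M) j)
      = (\<Sum>j\<in>insert a (set_mset M). j * count M j + (if j = a then a else 0))"
    by (rule sum.cong) auto
  also have "\<dots> = (\<Sum>j\<in>insert a (set_mset M). j * count M j) + a"
    by (simp add: sum.distrib)
  also have "(\<Sum>j\<in>insert a (set_mset M). j * count M j) = (\<Sum>j\<in>set_mset M. j * count M j)"
    by (rule sum.mono_neutral_right) auto
  finally show ?case using add by simp
qed simp

lemma zee_add_mset: "zee (add_mset j M) = zee M * (j * count (add_mset j M) j)"
proof -
  let ?A = "insert j (set_mset M)"
  have zee_on: "zee N = (\<Prod>i\<in>?A. i ^ count N i * fact (count N i))" if "set_mset N \<subseteq> ?A" for N
    unfolding zee_def by (rule prod.mono_neutral_left) (use that in \<open>auto simp: not_in_iff\<close>)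
  have rest: "(\<Prod>i\<in>?A - {j}. i ^ count (add_mset j M) i * fact (count (add_mset j M) i))
      = (\<Prod>i\<in>?A - {j}. i ^ count M i * fact (count M i))"
    by (rule prod.cong) auto
  have "zee M = j ^ count M j * fact (count M j) * (\<Prod>i\<in>?A - {j}. i ^ count M i * fact (count M i))"
    by (subst zee_on) (auto simp: prod.remove[of ?A j])
  moreover have "zee (add_mset j M) = j ^ Suc (count M j) * fact (Suc (count M j)) *
      (\<Prod>i\<in>?A - {j}. i ^ count M i * fact (count M i))"
    by (subst zee_on) (auto simp: prod.remove[of ?A j] rest)
  ultimately show ?thesis by (simp add: fact_Suc algebra_simps)
qed

lemma partitions_add_mset_bij:
  "bij_betw (\<lambda>(k, \<mu>). (add_mset (Suc k) \<mu>, Suc k))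
     (SIGMA k:{..n}. partitions (n - k)) (SIGMA \<nu>:partitions (Suc n). set_mset \<nu>)"
proof (rule bij_betw_byWitness[where f' = "\<lambda>(\<nu>, j). (j - 1, \<nu> - {#j#})"])
  show "(\<lambda>(\<nu>, j). (j - 1, \<nu> - {#j#})) ` (SIGMA \<nu>:partitions (Suc n). set_mset \<nu>)
      \<subseteq> (SIGMA k:{..n}. partitions (n - k))"
  proof (rule image_subsetI)
    fix x assume "x \<in> (SIGMA \<nu>:partitions (Suc n). set_mset \<nu>)"
    then obtain \<nu> j where x: "x = (\<nu>, j)" and \<nu>: "\<nu> \<in> partitions (Suc n)" and j: "j \<in># \<nu>"
      by blast
    have "0 < j" "j \<le> Suc n" "sum_mset (\<nu> - {#j#}) = Suc n - j"
      using \<nu> mem_le_sum_mset[OF j] j by (auto simp: partitions_def sum_mset.remove[OF j])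
    with \<nu> show "(\<lambda>(\<nu>, j). (j - 1, \<nu> - {#j#})) x \<in> (SIGMA k:{..n}. partitions (n - k))"
      unfolding x by (auto simp: partitions_def dest: in_diffD)
  qed
qed (auto simp: partitions_def)

definition partition_weight :: "(nat \<Rightarrow> real) \<Rightarrow> nat multiset \<Rightarrow> real" where
  "partition_weight p \<nu> = (1 / real (zee \<nu>)) * (\<Prod>i\<in>#\<nu>. p i)"

text \<open>For power sums p this is h_m, by the cycle-index formula h_m = \<Sum>_(|\<nu>|=m) p_\<nu>/z_\<nu>.\<close>

definition complete_symm :: "(nat \<Rightarrow> real) \<Rightarrow> nat \<Rightarrow> real" where
  "complete_symm p m = (\<Sum>\<nu>\<in>partitions m. partition_weight p \<nu>)"

lemma complete_symm_0 [simp]: "complete_symm p 0 = 1"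
  by (simp add: complete_symm_def partitions_0 partition_weight_def zee_def)

lemma partition_weight_add_mset:
  assumes "0 < j"
  shows "partition_weight p (add_mset j \<mu>) * (real j * real (count (add_mset j \<mu>) j))
    = p j * partition_weight p \<mu>"
proof -
  define c where "c = real j * real (count (add_mset j \<mu>) j)"
  have "real (zee (add_mset j \<mu>)) = real (zee \<mu>) * c"
    by (simp add: c_def zee_add_mset algebra_simps)
  moreover have "c \<noteq> 0"
    using assms by (simp add: c_def)
  ultimately show ?thesis
    unfolding partition_weight_def c_def[symmetric] by simp
qed

lemma complete_symm_Suc:
  "real (Suc n) * complete_symm p (Suc n) = (\<Sum>k\<le>n. p (Suc k) * complete_symm p (n - k))"
proof -
  let ?w = "partition_weight p"
  have "real (Suc n) * complete_symm p (Suc n) = (\<Sum>\<nu>\<in>partitions (Suc n). ?w \<nu> * real (sum_mset \<nu>))"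
    unfolding complete_symm_def sum_distrib_left
    by (rule sum.cong) (auto simp: partitions_def)
  also have "\<dots> = (\<Sum>\<nu>\<in>partitions (Suc n). \<Sum>j\<in>set_mset \<nu>. ?w \<nu> * (real j * real (count \<nu> j)))"
    by (simp add: sum_mset_eq_sum_count sum_distrib_left)
  also have "\<dots> = (\<Sum>(\<nu>, j)\<in>(SIGMA \<nu>:partitions (Suc n). set_mset \<nu>). ?w \<nu> * (real j * real (count \<nu> j)))"
    by (rule sum.Sigma) (auto simp: finite_partitions)
  also have "\<dots> = (\<Sum>(k, \<mu>)\<in>(SIGMA k:{..n}. partitions (n - k)). p (Suc k) * ?w \<mu>)"
    by (subst sum.reindex_bij_betw[OF partitions_add_mset_bij, symmetric])
       (simp only: split_def fst_conv snd_conv partition_weight_add_mset zero_less_Suc)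
  also have "\<dots> = (\<Sum>k\<le>n. p (Suc k) * complete_symm p (n - k))"
    by (simp add: sum.Sigma[symmetric] finite_partitions complete_symm_def sum_distrib_left)
  finally show ?thesis .
qed

lemma complete_symm_unique:
  assumes "R 0 = 1" and "\<And>n. real (Suc n) * R (Suc n) = (\<Sum>k\<le>n. p (Suc k) * R (n - k))"
  shows "R = complete_symm p"
proof
  fix m show "R m = complete_symm p m"
  proof (induction m rule: less_induct)
    case (less m)
    show ?case
    proof (cases m)
      case (Suc n)
      have "(\<Sum>k\<le>n. p (Suc k) * R (n - k)) = (\<Sum>k\<le>n. p (Suc k) * complete_symm p (n - k))"
        using less Suc by (intro sum.cong) auto
      then have "real (Suc n) * R (Suc n) = real (Suc n) * complete_symm p (Suc n)"
        using assms(2)[of n] complete_symm_Suc[of n p] by simp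
      with Suc show ?thesis by (simp only: mult_cancel_left of_nat_eq_0_iff) simp
    qed (simp add: assms(1))
  qed
qed

lemma complete_symm_zero: "complete_symm (\<lambda>_. 0) m = (if m = 0 then 1 else 0)"
  by (rule fun_cong[OF complete_symm_unique[symmetric]]) auto

lemma convolution_power_shift:
  fixes x :: "'a :: comm_ring_1"
  assumes "g 0 = 0" and "\<And>j. g (Suc j) = h j"
  shows "(\<Sum>k\<le>n. x ^ Suc k * h (n - k)) - x * (\<Sum>k\<le>n. x ^ Suc k * g (n - k)) = x * h n"
proof (cases n)
  case (Suc n')
  have "(\<Sum>k\<le>n. x ^ Suc k * h (n - k)) = x * h n + (\<Sum>k\<le>n'. x ^ Suc (Suc k) * h (n' - k))"
    unfolding Suc by (subst sum.atMost_Suc_shift) simp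
  moreover have "x * (\<Sum>k\<le>n. x ^ Suc k * g (n - k)) = (\<Sum>k\<le>n'. x ^ Suc (Suc k) * h (n' - k))"
    unfolding Suc sum.atMost_Suc
    by (auto simp: assms Suc_diff_le sum_distrib_left mult.assoc intro: sum.cong)
  ultimately show ?thesis by simp
qed (simp add: assms)

text \<open>Removing the letter x multiplies \<Sum> h_m z^m by 1 - xz; the product is identified
  through uniqueness of solutions of the Newton recursion.\<close>

lemma complete_symm_remove_letter:
  "complete_symm (\<lambda>k. p k - x ^ k) (Suc m) = complete_symm p (Suc m) - x * complete_symm p m"
proof -
  let ?h = "complete_symm p"
  define h' where "h' j = (if j = 0 then 0 else ?h (j - 1))" for j
  have newton_shift: "(\<Sum>k\<le>n. p (Suc k) * h' (n - k)) = real n * ?h n" for n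
  proof (cases n)
    case (Suc n')
    have "(\<Sum>k\<le>n. p (Suc k) * h' (n - k)) = (\<Sum>k\<le>n'. p (Suc k) * ?h (n' - k))"
      unfolding Suc sum.atMost_Suc by (auto simp: h'_def Suc_diff_le intro: sum.cong)
    then show ?thesis
      using complete_symm_Suc[of n' p] Suc by simp
  qed (simp add: h'_def)
  have telescope: "(\<Sum>k\<le>n. x ^ Suc k * ?h (n - k)) - x * (\<Sum>k\<le>n. x ^ Suc k * h' (n - k)) = x * ?h n" for n
    by (rule convolution_power_shift) (simp_all add: h'_def)
  have "(\<lambda>j. ?h j - x * h' j) = complete_symm (\<lambda>k. p k - x ^ k)"
  proof (rule complete_symm_unique)
    fix n
    have "(\<Sum>k\<le>n. (p (Suc k) - x ^ Suc k) * (?h (n - k) - x * h' (n - k)))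
        = (\<Sum>k\<le>n. p (Suc k) * ?h (n - k) - x * (p (Suc k) * h' (n - k))
            - (x ^ Suc k * ?h (n - k) - x * (x ^ Suc k * h' (n - k))))"
      by (rule sum.cong) (simp_all add: algebra_simps)
    also have "\<dots> = (\<Sum>k\<le>n. p (Suc k) * ?h (n - k)) - x * (\<Sum>k\<le>n. p (Suc k) * h' (n - k))
          - ((\<Sum>k\<le>n. x ^ Suc k * ?h (n - k)) - x * (\<Sum>k\<le>n. x ^ Suc k * h' (n - k)))"
      by (simp only: sum_subtractf sum_distrib_left)
    also have "\<dots> = real (Suc n) * ?h (Suc n) - x * (real n * ?h n) - x * ?h n"
      by (simp only: complete_symm_Suc newton_shift telescope)
    also have "\<dots> = real (Suc n) * (?h (Suc n) - x * h' (Suc n))"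
      by (simp add: h'_def algebra_simps)
    finally show "real (Suc n) * (?h (Suc n) - x * h' (Suc n))
        = (\<Sum>k\<le>n. (p (Suc k) - x ^ Suc k) * (?h (n - k) - x * h' (n - k)))" by simp
  qed (simp add: h'_def)
  from fun_cong[OF this, of "Suc m"] show ?thesis
    by (simp add: h'_def)
qed

lemma complete_symm_add_letter:
  "complete_symm (\<lambda>k. p k + x ^ k) (Suc m) = complete_symm p (Suc m) + x * complete_symm (\<lambda>k. p k + x ^ k) m"
  using complete_symm_remove_letter[of "\<lambda>k. p k + x ^ k" x m] by simp

text \<open>Agreement with an integer Laurent polynomial in s, t, required only where {k} \<noteq> 0.\<close>

definition int_laurent :: "(real \<Rightarrow> real \<Rightarrow> real) \<Rightarrow> bool" where
  "int_laurent f \<longleftrightarrow> (\<exists>S c. finite S \<and> (\<forall>s t. 0 < s \<longrightarrow> s \<noteq> 1 \<longrightarrow> 0 < t \<longrightarrow>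
     f s t = (\<Sum>p\<in>S. of_int (c p) * s powi fst p * t powi snd p)))"

lemma int_laurentI:
  assumes "finite S"
    and "\<And>s t. 0 < s \<Longrightarrow> s \<noteq> 1 \<Longrightarrow> 0 < t \<Longrightarrow> f s t = (\<Sum>p\<in>S. of_int (c p) * s powi fst p * t powi snd p)"
  shows "int_laurent f"
  using assms unfolding int_laurent_def by blast

lemma int_laurent_coeffs:
  assumes "int_laurent f"
  shows "\<exists>c :: int \<times> int \<Rightarrow> int. finite {p. c p \<noteq> 0} \<and>
    (\<forall>s t. 0 < s \<longrightarrow> s \<noteq> 1 \<longrightarrow> 0 < t \<longrightarrow>
       f s t = (\<Sum>p\<in>{p. c p \<noteq> 0}. of_int (c p) * s powi fst p * t powi snd p))"
proof -
  obtain S c where S: "finite S" and f: "\<forall>s t. 0 < s \<longrightarrow> s \<noteq> 1 \<longrightarrow> 0 < t \<longrightarrow>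
      f s t = (\<Sum>p\<in>S. of_int (c p) * s powi fst p * t powi snd p)"
    using assms unfolding int_laurent_def by blast
  define c' where "c' p = (if p \<in> S then c p else 0)" for p
  have supp: "{p. c' p \<noteq> 0} \<subseteq> S"
    by (auto simp: c'_def)
  have "(\<Sum>p\<in>S. of_int (c p) * s powi fst p * t powi snd p)
      = (\<Sum>p\<in>{p. c' p \<noteq> 0}. of_int (c' p) * s powi fst p * t powi snd p)" for s t :: real
    by (rule sum.mono_neutral_cong_right) (use S supp in \<open>auto simp: c'_def\<close>)
  with S supp f show ?thesis
    by (intro exI[of _ c']) (auto intro: finite_subset)
qed

lemma int_laurent_cong:
  assumes "int_laurent f" and "\<And>s t. 0 < s \<Longrightarrow> s \<noteq> 1 \<Longrightarrow> 0 < t \<Longrightarrow> f s t = g s t"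
  shows "int_laurent g"
  using assms unfolding int_laurent_def by metis

lemma int_laurent_monomial: "int_laurent (\<lambda>s t. of_int k * s powi a * t powi b)"
  by (rule int_laurentI[of "{(a, b)}" _ "\<lambda>_. k"]) auto

lemma int_laurent_const: "int_laurent (\<lambda>s t. of_int k)"
  using int_laurent_monomial[of k 0 0] by simp

lemma int_laurent_add:
  assumes "int_laurent f" "int_laurent g"
  shows "int_laurent (\<lambda>s t. f s t + g s t)"
proof -
  obtain S c where S: "finite S" and f: "\<forall>s t. 0 < s \<longrightarrow> s \<noteq> 1 \<longrightarrow> 0 < t \<longrightarrow>
      f s t = (\<Sum>p\<in>S. of_int (c p) * s powi fst p * t powi snd p)"
    using assms(1) unfolding int_laurent_def by blast
  obtain T d where T: "finite T" and g: "\<forall>s t. 0 < s \<longrightarrow> s \<noteq> 1 \<longrightarrow> 0 < t \<longrightarrow>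
      g s t = (\<Sum>p\<in>T. of_int (d p) * s powi fst p * t powi snd p)"
    using assms(2) unfolding int_laurent_def by blast
  let ?e = "\<lambda>p. (if p \<in> S then c p else 0) + (if p \<in> T then d p else 0)"
  show ?thesis
  proof (rule int_laurentI[of "S \<union> T" _ ?e])
    fix s t :: real assume "0 < s" "s \<noteq> 1" "0 < t"
    moreover have "(\<Sum>p\<in>S. of_int (c p) * s powi fst p * t powi snd p)
        = (\<Sum>p\<in>S \<union> T. of_int (if p \<in> S then c p else 0) * s powi fst p * t powi snd p)"
      "(\<Sum>p\<in>T. of_int (d p) * s powi fst p * t powi snd p)
        = (\<Sum>p\<in>S \<union> T. of_int (if p \<in> T then d p else 0) * s powi fst p * t powi snd p)"
      by (rule sum.mono_neutral_cong_left; use S T in auto)+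
    ultimately show "f s t + g s t = (\<Sum>p\<in>S \<union> T. of_int (?e p) * s powi fst p * t powi snd p)"
      using f g by (simp add: sum.distrib[symmetric] algebra_simps)
  qed (use S T in simp)
qed

lemma int_laurent_sum:
  assumes "finite A" "\<And>x. x \<in> A \<Longrightarrow> int_laurent (h x)"
  shows "int_laurent (\<lambda>s t. \<Sum>x\<in>A. h x s t)"
  using assms
proof (induction A rule: finite_induct)
  case empty
  show ?case using int_laurent_const[of 0] by simp
qed (simp add: int_laurent_add)

lemma int_laurent_scale:
  assumes "int_laurent f"
  shows "int_laurent (\<lambda>s t. of_int k * f s t)"
proof -
  obtain S c where S: "finite S" and f: "\<forall>s t. 0 < s \<longrightarrow> s \<noteq> 1 \<longrightarrow> 0 < t \<longrightarrow>
      f s t = (\<Sum>p\<in>S. of_int (c p) * s powi fst p * t powi snd p)"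
    using assms unfolding int_laurent_def by blast
  show ?thesis
    by (rule int_laurentI[of S _ "\<lambda>p. k * c p"]) (use S f in \<open>auto simp: sum_distrib_left mult.assoc\<close>)
qed

lemma int_laurent_mult:
  assumes "int_laurent f" "int_laurent g"
  shows "int_laurent (\<lambda>s t. f s t * g s t)"
proof -
  obtain S c where S: "finite S" and f: "\<forall>s t. 0 < s \<longrightarrow> s \<noteq> 1 \<longrightarrow> 0 < t \<longrightarrow>
      f s t = (\<Sum>p\<in>S. of_int (c p) * s powi fst p * t powi snd p)"
    using assms(1) unfolding int_laurent_def by blast
  obtain T d where T: "finite T" and g: "\<forall>s t. 0 < s \<longrightarrow> s \<noteq> 1 \<longrightarrow> 0 < t \<longrightarrow>
      g s t = (\<Sum>q\<in>T. of_int (d q) * s powi fst q * t powi snd q)"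
    using assms(2) unfolding int_laurent_def by blast
  have "int_laurent (\<lambda>s t. \<Sum>p\<in>S. \<Sum>q\<in>T.
      of_int (c p * d q) * s powi (fst p + fst q) * t powi (snd p + snd q))"
    using S T by (intro int_laurent_sum int_laurent_monomial)
  then show ?thesis
  proof (rule int_laurent_cong)
    fix s t :: real assume "0 < s" "s \<noteq> 1" "0 < t"
    with f g show "(\<Sum>p\<in>S. \<Sum>q\<in>T. of_int (c p * d q) * s powi (fst p + fst q) * t powi (snd p + snd q))
        = f s t * g s t"
      by (simp add: sum_product power_int_add algebra_simps)
  qed
qed

lemma int_laurent_diff:
  assumes "int_laurent f" "int_laurent g"
  shows "int_laurent (\<lambda>s t. f s t - g s t)"
  using int_laurent_add[OF assms(1) int_laurent_scale[OF assms(2), of "-1"]] by simp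

text \<open>A letter (e, a, b) is the monomial s^a t^b, counted positively iff e.\<close>

fun signed_power_sum :: "(bool \<times> int \<times> int) list \<Rightarrow> real \<Rightarrow> real \<Rightarrow> nat \<Rightarrow> real" where
  "signed_power_sum [] s t k = 0"
| "signed_power_sum ((e, a, b) # L) s t k =
     (if e then 1 else -1) * (s powi a * t powi b) ^ k + signed_power_sum L s t k"

lemma int_laurent_complete_symm_signed_power_sum:
  "int_laurent (\<lambda>s t. complete_symm (signed_power_sum L s t) m)"
proof (induction L arbitrary: m)
  case Nil
  show ?case
    using int_laurent_const[of "if m = 0 then 1 else 0"]
    by (simp add: complete_symm_zero if_distrib cong: if_cong)
next
  case (Cons letter L)
  obtain e a b where letter: "letter = (e, a, b)" by (cases letter)
  let ?x = "\<lambda>s t. s powi a * t powi b"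
  have x: "int_laurent ?x"
    using int_laurent_monomial[of 1 a b] by simp
  show ?case
  proof (cases e)
    case True
    then have "signed_power_sum (letter # L) s t = (\<lambda>k. signed_power_sum L s t k + (?x s t) ^ k)" for s t
      by (simp add: letter fun_eq_iff)
    moreover have "int_laurent (\<lambda>s t. complete_symm (\<lambda>k. signed_power_sum L s t k + (?x s t) ^ k) m)"
    proof (induction m)
      case (Suc m)
      then show ?case
        by (simp only: complete_symm_add_letter) (intro int_laurent_add int_laurent_mult Cons.IH x)
    qed (simp add: int_laurent_const[of 1, simplified])
    ultimately show ?thesis by simp
  next
    case False
    then have "signed_power_sum (letter # L) s t = (\<lambda>k. signed_power_sum L s t k - (?x s t) ^ k)" for s t
      by (simp add: letter fun_eq_iff)
    moreover have "int_laurent (\<lambda>s t. complete_symm (\<lambda>k. signed_power_sum L s t k - (?x s t) ^ k) m)"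
    proof (cases m)
      case (Suc m')
      then show ?thesis
        by (simp only: complete_symm_remove_letter) (intro int_laurent_diff int_laurent_mult Cons.IH x)
    qed (simp add: int_laurent_const[of 1, simplified])
    ultimately show ?thesis by simp
  qed
qed

lemma qbr_geometric:
  assumes "y \<noteq> 0"
  shows "qbr y (int n) = qbr y 1 * (\<Sum>j<n. y powi (2 * int j + 1 - int n))"
proof -
  have summand: "y powi (2 * int j + 1 - int n) = y * (y ^ 2) ^ j / y ^ n" for j
  proof -
    have exponent: "2 * int j + 1 - int n = int (2 * j + 1) - int n"
      by simp
    have "y powi (int (2 * j + 1) - int n) = y powi int (2 * j + 1) / y powi int n"
      by (rule power_int_diff) (use assms in auto)
    then have "y powi (2 * int j + 1 - int n) = y ^ (2 * j + 1) / y ^ n"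
      by (simp only: exponent power_int_of_nat)
    then show ?thesis
      by (simp add: power_mult[symmetric] mult.commute)
  qed
  have "qbr y 1 * (\<Sum>j<n. y powi (2 * int j + 1 - int n)) = (y - 1 / y) * y / y ^ n * (\<Sum>j<n. (y ^ 2) ^ j)"
    unfolding summand by (simp add: qbr_def power_int_minus_divide sum_distrib_left sum_divide_distrib mult.assoc)
  also have "(y - 1 / y) * y = y ^ 2 - 1"
    using assms by (simp add: field_simps power2_eq_square)
  also have "(y ^ 2 - 1) / y ^ n * (\<Sum>j<n. (y ^ 2) ^ j) = ((y ^ 2) ^ n - 1) / y ^ n"
    by (simp add: power_diff_1_eq)
  also have "\<dots> = qbr y (int n)"
    using assms by (simp add: qbr_def power_int_minus_divide field_simps power_mult[symmetric] mult_2_right power_add)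
  finally show ?thesis ..
qed

lemma qbr_sign_abs: "qbr y n = (if 0 \<le> n then 1 else -1) * qbr y (int (nat \<bar>n\<bar>))"
  by (simp add: qbr_def)

lemma qbr_mult: "qbr y (n * int k) = qbr (y ^ k) n"
  by (simp add: qbr_def power_int_power mult.commute)

lemma qbr_1_nonzero:
  assumes "0 < y" "y \<noteq> 1"
  shows "qbr y 1 \<noteq> 0"
proof
  assume "qbr y 1 = 0"
  with assms(1) have "y ^ 2 = 1 ^ 2"
    by (simp add: qbr_def power_int_minus_divide field_simps power2_eq_square)
  with assms show False
    using power_eq_iff_eq_base[of 2 y 1] by simp
qed

definition ratio_alphabet :: "int \<Rightarrow> (bool \<times> int \<times> int) list" where
  "ratio_alphabet N = concat (map (\<lambda>j. [(0 \<le> N, 2 * int j + 1 - int (nat \<bar>N\<bar>), 1),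
                                        (N < 0, 2 * int j + 1 - int (nat \<bar>N\<bar>), -1)]) [0..<nat \<bar>N\<bar>])"

lemma signed_power_sum_append:
  "signed_power_sum (xs @ ys) s t k = signed_power_sum xs s t k + signed_power_sum ys s t k"
  by (induction xs s t k rule: signed_power_sum.induct) auto

lemma signed_power_sum_concat:
  "signed_power_sum (concat (map f xs)) s t k = (\<Sum>x\<leftarrow>xs. signed_power_sum (f x) s t k)"
  by (induction xs) (simp_all add: signed_power_sum_append)

lemma signed_power_sum_ratio_alphabet:
  "signed_power_sum (ratio_alphabet N) s t k = (if 0 \<le> N then 1 else -1) * qbr (t ^ k) 1 *
     (\<Sum>j<nat \<bar>N\<bar>. (s ^ k) powi (2 * int j + 1 - int (nat \<bar>N\<bar>)))"
proof -
  have power_swap: "(x powi e) ^ k = (x ^ k) powi e" for x :: real and e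
    by (simp add: power_int_power power_int_power' mult.commute)
  have "signed_power_sum (ratio_alphabet N) s t k = (\<Sum>j\<leftarrow>[0..<nat \<bar>N\<bar>].
      (if 0 \<le> N then 1 else -1) * qbr (t ^ k) 1 * (s ^ k) powi (2 * int j + 1 - int (nat \<bar>N\<bar>)))"
    unfolding ratio_alphabet_def signed_power_sum_concat
    by (rule arg_cong[where f = sum_list], rule map_cong)
       (auto simp: qbr_def power_mult_distrib power_divide power_swap power_int_minus_divide algebra_simps)
  then show ?thesis
    by (simp add: sum_distrib_left atLeast0LessThan[symmetric] sum_set_upt_conv_sum_list_nat[symmetric])
qed

lemma qbr_ratio_eq_signed_power_sum:
  assumes "0 < s" "s \<noteq> 1" "0 < k"
  shows "qbr s (N * int k) * qbr t (int k) / qbr s (int k) = signed_power_sum (ratio_alphabet N) s t k"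
proof -
  let ?sign = "if 0 \<le> N then 1 else -1 :: real"
  let ?G = "\<Sum>j<nat \<bar>N\<bar>. (s ^ k) powi (2 * int j + 1 - int (nat \<bar>N\<bar>))"
  have "0 < s ^ k" "s ^ k \<noteq> 1"
    using assms power_eq_iff_eq_base[of k s 1] by auto
  then have nonzero: "qbr (s ^ k) 1 \<noteq> 0"
    by (rule qbr_1_nonzero)
  have "qbr s (N * int k) = ?sign * qbr (s ^ k) (int (nat \<bar>N\<bar>))"
    by (simp only: qbr_mult qbr_sign_abs[of _ N])
  also have "\<dots> = ?sign * (qbr (s ^ k) 1 * ?G)"
    using \<open>0 < s ^ k\<close> by (simp only: qbr_geometric less_irrefl)
  finally have "qbr s (N * int k) * qbr t (int k) / qbr s (int k)
      = ?sign * (qbr (s ^ k) 1 * ?G) * qbr (t ^ k) 1 / qbr (s ^ k) 1"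
    using qbr_mult[of _ 1 k] by simp
  also have "\<dots> = signed_power_sum (ratio_alphabet N) s t k"
    using nonzero by (simp only: signed_power_sum_ratio_alphabet) (simp add: field_simps)
  finally show ?thesis .
qed

lemma prod_mset_mult_divide:
  "(\<Prod>i\<in>#M. f i * g i / h i :: real) = (\<Prod>i\<in>#M. f i) * (\<Prod>i\<in>#M. g i) / (\<Prod>i\<in>#M. h i)"
  by (induction M) auto

lemma Zsum_eq_complete_symm:
  assumes "0 < s" "s \<noteq> 1"
  shows "Zsum \<tau> m s t = (-1) powi (int m * \<tau>) * complete_symm (signed_power_sum (ratio_alphabet (int m * \<tau>)) s t) m"
proof -
  have "(\<Prod>i\<in>#\<nu>. qbr s (int m * \<tau> * int i)) * (\<Prod>i\<in>#\<nu>. qbr t (int i)) / (\<Prod>i\<in>#\<nu>. qbr s (int i))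
      = (\<Prod>i\<in>#\<nu>. signed_power_sum (ratio_alphabet (int m * \<tau>)) s t i)"
    if "\<nu> \<in> partitions m" for \<nu>
    unfolding prod_mset_mult_divide[symmetric]
    by (rule arg_cong[where f = prod_mset], rule image_mset_cong, rule qbr_ratio_eq_signed_power_sum)
       (use assms that in \<open>auto simp: partitions_def\<close>)
  then show ?thesis
    by (simp add: Zsum_def complete_symm_def partition_weight_def sum_distrib_left)
qed

theorem lemma4p18:
  fixes \<tau> :: int and m :: nat
  assumes "1 \<le> m"
  shows "\<exists>c :: int \<times> int \<Rightarrow> int. finite {p. c p \<noteq> 0} \<and>
    (\<forall>s t :: real. 0 < s \<longrightarrow> s \<noteq> 1 \<longrightarrow> 0 < t \<longrightarrow>
       Zsum \<tau> m s t = (\<Sum>p\<in>{p. c p \<noteq> 0}. of_int (c p) * s powi fst p * t powi snd p))"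
proof -
  let ?N = "int m * \<tau>"
  have sign: "(-1 :: real) powi ?N = of_int (if even ?N then 1 else -1)"
    by (simp add: power_int_minus_left)
  have "int_laurent (\<lambda>s t. of_int (if even ?N then 1 else -1) *
      complete_symm (signed_power_sum (ratio_alphabet ?N) s t) m)"
    by (intro int_laurent_scale int_laurent_complete_symm_signed_power_sum)
  then have "int_laurent (Zsum \<tau> m)"
    by (rule int_laurent_cong) (simp add: Zsum_eq_complete_symm sign)
  then show ?thesis
    by (rule int_laurent_coeffs)
qed

end
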